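(* Let $x,y,z$ be positive integers and let $p$ be a prime with $p\ge 3$ and $p\notin\{3,5\}$. If $\gcd(x,y)=1$ and $x^{p}+y^{p}=z^{p}$, then there exist positive integers $a,b,c$ such that $\gcd(a,b)=1$ and $a^{p}-4b^{p}=c^{2}$. *)

theory Defs
  imports "HOL-Computational_Algebra.Primes"
begin

end

theory Submission
  imports Defs
begin

text \<open>A primitive solution of \<open>x\<^sup>p + y\<^sup>p = z\<^sup>p\<close> gives the solution
  \<open>(a, b, c) = (z\<^sup>2, x y, \<bar>x\<^sup>p - y\<^sup>p\<bar>)\<close> of \<open>a\<^sup>p - 4 b\<^sup>p = c\<^sup>2\<close>, because
  \<open>(x\<^sup>p + y\<^sup>p)\<^sup>2 - 4 x\<^sup>p y\<^sup>p = (x\<^sup>p - y\<^sup>p)\<^sup>2\<close>. Primitivity makes \<open>z\<close> coprime to \<open>x y\<close>,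
  and \<open>c > 0\<close> because \<open>x = y\<close> would force \<open>z\<^sup>p = 2\<close>.\<close>

lemma power_sum_sq_minus_four_prod:
  fixes x y z :: "'a :: comm_ring_1"
  assumes "x ^ n + y ^ n = z ^ n"
  shows "(z\<^sup>2) ^ n - 4 * (x * y) ^ n = (x ^ n - y ^ n)\<^sup>2"
proof -
  have "(z\<^sup>2) ^ n - 4 * (x * y) ^ n = (x ^ n + y ^ n)\<^sup>2 - 4 * x ^ n * y ^ n"
    by (simp add: assms power_mult[symmetric] mult.commute power_mult_distrib)
  also have "\<dots> = (x ^ n - y ^ n)\<^sup>2"
    by (simp add: power2_eq_square algebra_simps)
  finally show ?thesis .
qed

lemma coprime_power_sum_left:
  fixes x y z :: "'a :: semiring_gcd"
  assumes "n > 0" "coprime x y" "x ^ n + y ^ n = z ^ n"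
  shows "coprime x z"
proof -
  have "gcd (x ^ n) (x ^ n + y ^ n) = gcd (x ^ n) (y ^ n)"
    by (rule gcd_add2)
  with assms(2,3) have "coprime (x ^ n) (z ^ n)"
    by (simp add: coprime_iff_gcd_eq_1[symmetric])
  then show ?thesis
    using assms(1) by simp
qed

lemma power_ne_two:
  fixes z :: nat
  assumes "n \<ge> 2"
  shows "z ^ n \<noteq> 2"
proof
  assume z: "z ^ n = 2"
  then have "z \<ge> 2"
    using assms by (cases "z \<le> 1") (auto simp: le_Suc_eq power_0_left)
  have "(2::nat) ^ 2 \<le> 2 ^ n"
    using assms by (rule power_increasing) simp
  also have "\<dots> \<le> z ^ n"
    using \<open>z \<ge> 2\<close> by (rule power_mono) simp
  finally show False
    using z by simp
qed

lemma power_sum_eq_power_distinct: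
  fixes x y z :: nat
  assumes "n \<ge> 2" "coprime x y" "x ^ n + y ^ n = z ^ n"
  shows "x \<noteq> y"
proof
  assume "x = y"
  with assms(2) have "x = 1" "y = 1" by simp_all
  with assms(3) have "z ^ n = 2" by simp
  with power_ne_two[OF assms(1)] show False by simp
qed

theorem theorem1:
  fixes x y z p :: nat
  assumes "x > 0" "y > 0" "z > 0"
    and "prime p" "p \<ge> 3" "p \<notin> {3, 5}"
    and "gcd x y = 1"
    and "x ^ p + y ^ p = z ^ p"
  shows "\<exists>a b c :: int. a > 0 \<and> b > 0 \<and> c > 0 \<and> gcd a b = 1 \<and>
           a ^ p - 4 * b ^ p = c ^ 2"
proof (intro exI conjI)
  have xy: "coprime x y" and fermat: "x ^ p + y ^ p = z ^ p"
    using assms(7,8) by (simp_all add: coprime_iff_gcd_eq_1)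
  have "coprime x z" "coprime y z"
    using coprime_power_sum_left[OF _ xy fermat] coprime_power_sum_left[of p y x z] xy fermat
      assms(5) by (simp_all add: coprime_commute add.commute)
  then show "gcd (int (z\<^sup>2)) (int (x * y)) = 1"
    by (simp add: coprime_commute flip: coprime_iff_gcd_eq_1)
  have "x \<noteq> y"
    using power_sum_eq_power_distinct[OF _ xy fermat] assms(5) by simp
  then have "int x ^ p \<noteq> int y ^ p"
    using assms(5) by (simp add: power_eq_iff_eq_base flip: of_nat_power)
  then show "\<bar>int x ^ p - int y ^ p\<bar> > 0" by simp
  have "int x ^ p + int y ^ p = int z ^ p"
    using fermat by (metis of_nat_add of_nat_power)
  then show "int (z\<^sup>2) ^ p - 4 * int (x * y) ^ p = \<bar>int x ^ p - int y ^ p\<bar>\<^sup>2"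
    by (simp add: power_sum_sq_minus_four_prod)
  show "int (z\<^sup>2) > 0" "int (x * y) > 0"
    using assms(1-3) by simp_all
qed

end
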